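(* Let $\mathcal D=(D,<,\rho)$ be a computable partially ordered set. There exists $U\in\mathrm{Max}_{\mathrm{PR}}[\{0,1\}^*\to\mathcal D]$ such that for every $F\in\mathrm{Max}_{\mathrm{PR}}[\{0,1\}^*\to\mathcal D]$ there is a constant $c$ with $K_U(d)\le K_F(d)+c$ for every $d$ in the range of $F$.
   Context: A computable partially ordered set is a triple $\mathcal D=(D,<,\rho)$ where $\rho:\mathbb N\to D$ is a bijection and $<$ is a strict partial order on $D$ with $\{(m,n):\rho(m)<\rho(n)\}$ computable; a partial function into $D$ is partial computable if its composition with $\rho^{-1}$ is. For a partial $f:\{0,1\}^*\times\mathbb N\to D$ monotone increasing in its second argument on its domain, $\max^{\mathcal D}f$ is the partial function defined exactly at those $p$ for which $\{f(p,t):t\in\mathbb N,\ f(p,t)\text{ defined}\}$ is finite and non-empty, with value its maximum element. $\mathrm{Max}_{\mathrm{PR}}[\{0,1\}^*\to\mathcal D]$ is the class of all $\max^{\mathcal D}f$ with $f$ partial computable and monotone increasing in its second argument. For a partial $\varphi:\{0,1\}^*\to D$, $K_\varphi:D\to\mathbb N$ is the partial function $K_\varphi(d)=\min\{|p|:\varphi(p)=d\}$, defined on the range of $\varphi$. *)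

theory Defs
  imports Main
begin

datatype recf = Zero | Succ | Proj nat | Comp recf "recf list" | Prim recf recf | Mini recf

inductive eval :: "recf \<Rightarrow> nat list \<Rightarrow> nat \<Rightarrow> bool" where
  eval_Zero: "eval Zero xs 0"
| eval_Succ: "eval Succ (x # xs) (Suc x)"
| eval_Proj: "i < length xs \<Longrightarrow> eval (Proj i) xs (xs ! i)"
| eval_Comp: "list_all2 (\<lambda>g y. eval g xs y) gs ys \<Longrightarrow> eval f ys z \<Longrightarrow> eval (Comp f gs) xs z"
| eval_Prim0: "eval f xs y \<Longrightarrow> eval (Prim f g) (0 # xs) y"
| eval_PrimS: "eval (Prim f g) (n # xs) y \<Longrightarrow> eval g (n # y # xs) z \<Longrightarrow> eval (Prim f g) (Suc n # xs) z"
| eval_Mini: "eval f (y # xs) 0 \<Longrightarrow> (\<forall>z<y. \<exists>w>0. eval f (z # xs) w) \<Longrightarrow> eval (Mini f) xs y"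

text \<open>Standard computable bijection between {0,1}* (bool lists) and nat.\<close>
fun bl_code :: "bool list \<Rightarrow> nat" where
  "bl_code [] = 0"
| "bl_code (b # bs) = 2 * bl_code bs + (if b then 2 else 1)"

definition computable_poset :: "('d \<Rightarrow> 'd \<Rightarrow> bool) \<Rightarrow> (nat \<Rightarrow> 'd) \<Rightarrow> bool" where
  "computable_poset lt \<rho> \<longleftrightarrow>
     bij \<rho> \<and>
     (\<forall>x. \<not> lt x x) \<and> (\<forall>x y z. lt x y \<longrightarrow> lt y z \<longrightarrow> lt x z) \<and>
     (\<exists>r. \<forall>m n. eval r [m, n] (if lt (\<rho> m) (\<rho> n) then 1 else 0))"

text \<open>A partial function {0,1}* x N -> D is partial computable iff its composition
with rho^-1 is partial recursive.\<close>
definition pc2 :: "(nat \<Rightarrow> 'd) \<Rightarrow> (bool list \<Rightarrow> nat \<Rightarrow> 'd option) \<Rightarrow> bool" where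
  "pc2 \<rho> f \<longleftrightarrow> (\<exists>r. \<forall>p t y. eval r [bl_code p, t] y \<longleftrightarrow> f p t = Some (\<rho> y))"

definition mono_second :: "('d \<Rightarrow> 'd \<Rightarrow> bool) \<Rightarrow> (bool list \<Rightarrow> nat \<Rightarrow> 'd option) \<Rightarrow> bool" where
  "mono_second lt f \<longleftrightarrow>
     (\<forall>p t t' d d'. t \<le> t' \<longrightarrow> f p t = Some d \<longrightarrow> f p t' = Some d' \<longrightarrow> (d = d' \<or> lt d d'))"

definition maxD :: "('d \<Rightarrow> 'd \<Rightarrow> bool) \<Rightarrow> (bool list \<Rightarrow> nat \<Rightarrow> 'd option) \<Rightarrow> bool list \<Rightarrow> 'd option" where
  "maxD lt f p =
     (let S = {d. \<exists>t. f p t = Some d} in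
      if finite S \<and> S \<noteq> {} then Some (THE d. d \<in> S \<and> (\<forall>e\<in>S. e = d \<or> lt e d)) else None)"

definition MaxPR :: "('d \<Rightarrow> 'd \<Rightarrow> bool) \<Rightarrow> (nat \<Rightarrow> 'd) \<Rightarrow> (bool list \<Rightarrow> 'd option) set" where
  "MaxPR lt \<rho> = {maxD lt f | f. pc2 \<rho> f \<and> mono_second lt f}"

definition Kc :: "(bool list \<Rightarrow> 'd option) \<Rightarrow> 'd \<Rightarrow> nat option" where
  "Kc \<phi> d = (if \<exists>p. \<phi> p = Some d then Some (LEAST n. \<exists>p. \<phi> p = Some d \<and> length p = n) else None)"

end

theory Submission
  imports Defs "HOL-Library.Nat_Bijection"
begin

text \<open>Halting computations of partial recursive programs are certified by finite lists of
derivation steps, and whether a natural number codes such a certificate is decidable. On input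
\<open>1\<^sup>e 0 p\<close> at stage \<open>t\<close>, the universal machine looks at the certificates coded below \<open>t\<close>
for outputs of program \<open>e\<close> on \<open>(p, _)\<close> and returns the one that dominates all others found,
if there is one. This is monotone in \<open>t\<close>, and when program \<open>e\<close> computes a monotone \<open>f\<close> its values
are outputs of \<open>f(p, _)\<close>, eventually including the maximum. So both maxima coincide, and the
description \<open>1\<^sup>e 0 p\<close> is only \<open>e + 1\<close> bits longer than \<open>p\<close>.\<close>

section \<open>Evaluation of partial recursive programs\<close>

lemma eval_Comp1: "eval g xs y \<Longrightarrow> eval f [y] z \<Longrightarrow> eval (Comp f [g]) xs z"
  by (rule eval_Comp[where ys="[y]"]) auto

lemma eval_Comp2: "eval g xs y \<Longrightarrow> eval h xs y' \<Longrightarrow> eval f [y, y'] z \<Longrightarrow> eval (Comp f [g, h]) xs z"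
  by (rule eval_Comp[where ys="[y, y']"]) auto

lemma eval_Proj_0: "eval (Proj 0) (x # xs) x"
  using eval_Proj[of 0 "x # xs"] by simp

lemma eval_Proj_1: "eval (Proj 1) (x # y # xs) y"
  using eval_Proj[of 1 "x # y # xs"] by simp

lemma eval_Proj_2: "eval (Proj 2) (x # y # z # xs) z"
  using eval_Proj[of 2 "x # y # z # xs"] by simp

lemma eval_Succ_eq: "y = Suc x \<Longrightarrow> eval Succ (x # xs) y"
  using eval_Succ by simp

lemma eval_Zero_eq: "y = 0 \<Longrightarrow> eval Zero xs y"
  using eval_Zero by simp

text \<open>The equation premises let backward chaining with these rules accept any output term,
leaving the arithmetic to the simplifier.\<close>
lemmas eval_intros = eval_Comp1 eval_Comp2 eval_Proj_0 eval_Proj_1 eval_Proj_2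
  eval_Succ_eq eval_Zero_eq

lemma eval_Prim_rec_nat:
  assumes "eval f xs b" and "\<And>i acc. eval g (i # acc # xs) (s i acc)"
  shows "eval (Prim f g) (n # xs) (rec_nat b s n)"
proof (induction n)
  case 0
  then show ?case using assms(1) by (simp add: eval_Prim0)
next
  case (Suc n)
  then show ?case using assms(2) by (simp add: eval_PrimS)
qed

lemma eval_Mini_total:
  assumes "\<And>y. eval h (y # xs) (H y)" and "H y0 = 0" and "\<forall>y<y0. H y > 0"
  shows "eval (Mini h) xs y0"
  using assms(1)[of y0] assms by (auto intro!: eval_Mini)

inductive_cases eval_ZeroE: "eval Zero xs y"
inductive_cases eval_SuccE: "eval Succ xs y"
inductive_cases eval_ProjE: "eval (Proj i) xs y"
inductive_cases eval_CompE: "eval (Comp f gs) xs y"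
inductive_cases eval_PrimE: "eval (Prim f g) xs y"
inductive_cases eval_MiniE: "eval (Mini f) xs y"

lemma list_all2_eval_unique:
  assumes "list_all2 (\<lambda>g y. eval g xs y \<and> (\<forall>y'. eval g xs y' \<longrightarrow> y = y')) gs ys"
    and "list_all2 (\<lambda>g y. eval g xs y) gs ys'"
  shows "ys = ys'"
  using assms
proof (induction arbitrary: ys' rule: list_all2_induct)
  case Nil
  then show ?case by simp
next
  case (Cons g gs y ys)
  then show ?case by (cases ys') auto
qed

lemma eval_deterministic: "eval r xs y \<Longrightarrow> eval r xs y' \<Longrightarrow> y = y'"
proof (induction arbitrary: y' rule: eval.induct)
  case (eval_Zero xs)
  then show ?case by (rule eval_ZeroE) simp
next
  case (eval_Succ x xs)
  then show ?case by (rule eval_SuccE) simp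
next
  case (eval_Proj i xs)
  from eval_Proj.prems show ?case by (rule eval_ProjE) simp
next
  case (eval_Comp xs gs ys f z)
  from eval_Comp.prems obtain ys' where
    ys': "list_all2 (\<lambda>g y. eval g xs y) gs ys'" and f: "eval f ys' y'"
    by (rule eval_CompE) simp
  have "ys = ys'" by (rule list_all2_eval_unique[OF eval_Comp.IH(1) ys'])
  then show ?case using eval_Comp.IH(2) f by simp
next
  case (eval_Prim0 f xs y g)
  from eval_Prim0.prems show ?case
    by (rule eval_PrimE) (use eval_Prim0.IH in simp_all)
next
  case (eval_PrimS f g n xs y z)
  from eval_PrimS.prems show ?case
  proof (rule eval_PrimE)
    fix n' xs' y2
    assume h: "Suc n # xs = Suc n' # xs'" "eval (Prim f g) (n' # xs') y2" "eval g (n' # y2 # xs') y'"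
    then have "y2 = y" using eval_PrimS.IH(1) by simp
    then show ?thesis using h eval_PrimS.IH(2) by simp
  qed simp
next
  case (eval_Mini f y xs)
  from eval_Mini.prems obtain y2 where
    y2: "eval f (y2 # xs) 0" "\<forall>z<y2. \<exists>w>0. eval f (z # xs) w" and "y' = y2"
    by (rule eval_MiniE) simp
  have "\<not> y < y2"
  proof
    assume "y < y2"
    then obtain w where "w > 0" "eval f (y # xs) w" using y2 by auto
    then show False using eval_Mini.IH(1) by fastforce
  qed
  moreover have "\<not> y2 < y"
  proof
    assume "y2 < y"
    then obtain w where "w > 0" "\<forall>w'. eval f (y2 # xs) w' \<longrightarrow> w = w'"
      using eval_Mini.IH(2) by blast
    then show False using y2(1) by blast
  qed
  ultimately show ?case using \<open>y' = y2\<close> by simp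
qed

lemma eval_Comp1_iff:
  assumes "\<forall>z. eval f [z] (F z)"
  shows "eval (Comp f [g]) xs y \<longleftrightarrow> (\<exists>v. eval g xs v \<and> y = F v)"
proof
  assume "eval (Comp f [g]) xs y"
  then obtain v where "eval g xs v" "eval f [v] y"
    by (auto elim!: eval_CompE simp: list_all2_Cons1)
  then show "\<exists>v. eval g xs v \<and> y = F v" using assms eval_deterministic by blast
qed (use assms in \<open>blast intro: eval_Comp1\<close>)

lemma eval_Mini_iff_Least:
  assumes "\<And>y. eval h (y # xs) (if P y then 0 else 1)"
  shows "eval (Mini h) xs v \<longleftrightarrow> (\<exists>y. P y) \<and> v = (LEAST y. P y)"
proof
  assume "eval (Mini h) xs v"
  then have v: "eval h (v # xs) 0" and below: "\<forall>z<v. \<exists>w>0. eval h (z # xs) w"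
    by (auto elim: eval_MiniE)
  have "P v"
    using eval_deterministic[OF assms[of v] v] by (simp split: if_splits)
  moreover have "\<not> P z" if "z < v" for z
  proof -
    obtain w where "w > 0" "eval h (z # xs) w" using below \<open>z < v\<close> by blast
    then show ?thesis using eval_deterministic[OF assms[of z]] by fastforce
  qed
  ultimately show "(\<exists>y. P y) \<and> v = (LEAST y. P y)"
    by (metis Least_equality not_le)
next
  assume "(\<exists>y. P y) \<and> v = (LEAST y. P y)"
  then show "eval (Mini h) xs v"
    by (intro eval_Mini_total[OF assms]) (auto dest: not_less_Least intro: LeastI_ex)
qed

section \<open>Arithmetic programs and Cantor pairing\<close>

definition r_pred :: recf where
  "r_pred = Prim Zero (Proj 0)"

lemma eval_pred: "y = x - 1 \<Longrightarrow> eval r_pred [x] y"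
proof -
  have "eval r_pred [x] (rec_nat 0 (\<lambda>i acc. i) x)"
    unfolding r_pred_def by (rule eval_Prim_rec_nat) (rule eval_intros | simp)+
  moreover have "rec_nat 0 (\<lambda>i acc. i) x = x - 1" by (cases x) auto
  ultimately show "y = x - 1 \<Longrightarrow> ?thesis" by simp
qed

text \<open>Primitive recursion runs on the first argument, so subtraction and addition are first
programmed with swapped arguments.\<close>
definition r_sub_rev :: recf where
  "r_sub_rev = Prim (Proj 0) (Comp r_pred [Proj 1])"

definition r_sub :: recf where
  "r_sub = Comp r_sub_rev [Proj 1, Proj 0]"

lemma eval_sub_rev: "eval r_sub_rev [y, x] (x - y)"
proof -
  have "eval r_sub_rev [y, x] (rec_nat x (\<lambda>i acc. acc - 1) y)"
    unfolding r_sub_rev_def by (rule eval_Prim_rec_nat) (rule eval_intros eval_pred | simp)+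
  moreover have "rec_nat x (\<lambda>i acc. acc - 1) y = x - y" by (induction y) auto
  ultimately show ?thesis by simp
qed

lemma eval_sub: "z = x - y \<Longrightarrow> eval r_sub [x, y] z"
  unfolding r_sub_def by (rule eval_intros eval_sub_rev | simp)+

definition r_add_rev :: recf where
  "r_add_rev = Prim (Proj 0) (Comp Succ [Proj 1])"

definition r_add :: recf where
  "r_add = Comp r_add_rev [Proj 1, Proj 0]"

lemma eval_add_rev: "eval r_add_rev [y, x] (x + y)"
proof -
  have "eval r_add_rev [y, x] (rec_nat x (\<lambda>i acc. Suc acc) y)"
    unfolding r_add_rev_def by (rule eval_Prim_rec_nat) (rule eval_intros | simp)+
  moreover have "rec_nat x (\<lambda>i acc. Suc acc) y = x + y" by (induction y) auto
  ultimately show ?thesis by simp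
qed

lemma eval_add: "z = x + y \<Longrightarrow> eval r_add [x, y] z"
  unfolding r_add_def by (rule eval_intros eval_add_rev | simp)+

definition r_triangle :: recf where
  "r_triangle = Prim Zero (Comp r_add [Proj 1, Comp Succ [Proj 0]])"

lemma eval_triangle: "y = triangle n \<Longrightarrow> eval r_triangle [n] y"
proof -
  have "eval r_triangle [n] (rec_nat 0 (\<lambda>i acc. acc + Suc i) n)"
    unfolding r_triangle_def by (rule eval_Prim_rec_nat) (rule eval_intros eval_add | simp)+
  moreover have "rec_nat 0 (\<lambda>i acc. acc + Suc i) n = triangle n" by (induction n) auto
  ultimately show "y = triangle n \<Longrightarrow> ?thesis" by simp
qed

definition npair :: "nat \<Rightarrow> nat \<Rightarrow> nat" where
  "npair a b = prod_encode (a, b)"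

definition nfst :: "nat \<Rightarrow> nat" where
  "nfst z = fst (prod_decode z)"

definition nsnd :: "nat \<Rightarrow> nat" where
  "nsnd z = snd (prod_decode z)"

lemma nfst_npair [simp]: "nfst (npair a b) = a"
  by (simp add: nfst_def npair_def)

lemma nsnd_npair [simp]: "nsnd (npair a b) = b"
  by (simp add: nsnd_def npair_def)

lemma npair_nfst_nsnd [simp]: "npair (nfst z) (nsnd z) = z"
  by (simp add: nfst_def nsnd_def npair_def)

lemma npair_eq_iff [simp]: "npair a b = npair c d \<longleftrightarrow> a = c \<and> b = d"
  by (simp add: npair_def)

lemma nsnd_le: "nsnd z \<le> z"
  by (metis le_prod_encode_2 npair_def npair_nfst_nsnd)

definition r_npair :: recf where
  "r_npair = Comp r_add [Comp r_triangle [Comp r_add [Proj 0, Proj 1]], Proj 0]"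

lemma eval_npair: "y = npair a b \<Longrightarrow> eval r_npair [a, b] y"
  unfolding r_npair_def npair_def prod_encode_def
  by (rule eval_intros eval_add eval_triangle | simp del: triangle_Suc)+

text \<open>Unpairing: \<open>z\<close> lies on the diagonal \<open>tri_index z\<close> of the Cantor enumeration.\<close>
definition tri_index :: "nat \<Rightarrow> nat" where
  "tri_index z = (LEAST s. z < triangle (Suc s))"

lemma tri_index_bounds: "triangle (tri_index z) \<le> z" "z < triangle (Suc (tri_index z))"
proof -
  have "z < triangle (Suc z)"
    using triangle_Suc[of z] by simp
  then show "z < triangle (Suc (tri_index z))"
    unfolding tri_index_def by (rule LeastI)
  show "triangle (tri_index z) \<le> z"
  proof (cases "tri_index z")
    case (Suc m)
    then have "\<not> z < triangle (Suc m)"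
      using not_less_Least[of m "\<lambda>s. z < triangle (Suc s)"] unfolding tri_index_def by simp
    then show ?thesis using Suc by simp
  qed simp
qed

definition r_tri_index :: recf where
  "r_tri_index = Mini (Comp r_sub [Comp Succ [Proj 1], Comp r_triangle [Comp Succ [Proj 0]]])"

lemma eval_tri_index: "eval r_tri_index [z] (tri_index z)"
  unfolding r_tri_index_def
proof (rule eval_Mini_total)
  show "eval (Comp r_sub [Comp Succ [Proj 1], Comp r_triangle [Comp Succ [Proj 0]]]) [s, z]
      (Suc z - triangle (Suc s))" for s
    by (rule eval_intros eval_sub eval_triangle | simp del: triangle_Suc)+
  show "Suc z - triangle (Suc (tri_index z)) = 0"
    using tri_index_bounds(2)[of z] by simp
  show "\<forall>y<tri_index z. 0 < Suc z - triangle (Suc y)"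
    using not_less_Least[of _ "\<lambda>s. z < triangle (Suc s)"] unfolding tri_index_def by force
qed

lemma prod_decode_tri_index:
  "prod_decode z = (z - triangle (tri_index z), tri_index z - (z - triangle (tri_index z)))"
proof -
  let ?m = "z - triangle (tri_index z)"
  have "prod_encode (?m, tri_index z - ?m) = z"
    using tri_index_bounds[of z] by (simp add: prod_encode_def)
  then show ?thesis by (metis prod_encode_inverse)
qed

definition r_nfst :: recf where
  "r_nfst = Comp r_sub [Proj 0, Comp r_triangle [r_tri_index]]"

definition r_nsnd :: recf where
  "r_nsnd = Comp r_sub [r_tri_index, r_nfst]"

lemma eval_nfst: "y = nfst z \<Longrightarrow> eval r_nfst [z] y"
proof -
  have "eval r_nfst [z] (z - triangle (tri_index z))"
    unfolding r_nfst_def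
    by (rule eval_intros eval_sub eval_triangle eval_tri_index | simp del: triangle_Suc)+
  moreover have "nfst z = z - triangle (tri_index z)"
    by (simp add: nfst_def prod_decode_tri_index[of z])
  ultimately show "y = nfst z \<Longrightarrow> ?thesis" by simp
qed

lemma eval_nsnd: "y = nsnd z \<Longrightarrow> eval r_nsnd [z] y"
proof -
  have "eval r_nsnd [z] (tri_index z - nfst z)"
    unfolding r_nsnd_def by (rule eval_intros eval_sub eval_tri_index eval_nfst | simp)+
  moreover have "nsnd z = tri_index z - nfst z"
    by (simp add: nfst_def nsnd_def prod_decode_tri_index[of z])
  ultimately show "y = nsnd z \<Longrightarrow> ?thesis" by simp
qed

section \<open>Computable functions and decidable predicates\<close>

text \<open>Several arguments are passed to a unary function as one nested \<open>npair\<close>.\<close>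
definition computable :: "(nat \<Rightarrow> nat) \<Rightarrow> bool" where
  "computable f \<longleftrightarrow> (\<exists>r. \<forall>z. eval r [z] (f z))"

definition decidable :: "(nat \<Rightarrow> bool) \<Rightarrow> bool" where
  "decidable P \<longleftrightarrow> computable (\<lambda>z. if P z then 1 else 0)"

lemma computable_cong: "computable f \<Longrightarrow> (\<And>z. f z = g z) \<Longrightarrow> computable g"
proof -
  assume "computable f" and "\<And>z. f z = g z"
  then show "computable g" by (metis ext)
qed

lemma decidable_cong: "decidable P \<Longrightarrow> (\<And>z. P z = Q z) \<Longrightarrow> decidable Q"
  unfolding decidable_def by (erule computable_cong) simp

lemma computable_id: "computable (\<lambda>z. z)"
  unfolding computable_def using eval_Proj_0 by blast

lemma computable_unary:
  assumes "\<And>a y. y = F a \<Longrightarrow> eval r [a] y" and "computable f"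
  shows "computable (\<lambda>z. F (f z))"
proof -
  obtain rf where "\<forall>z. eval rf [z] (f z)" using assms(2) unfolding computable_def by blast
  then have "\<forall>z. eval (Comp r [rf]) [z] (F (f z))" using assms(1) by (blast intro: eval_Comp1)
  then show ?thesis unfolding computable_def by blast
qed

lemma computable_binary:
  assumes "\<And>a b y. y = F a b \<Longrightarrow> eval r [a, b] y" and "computable f" and "computable g"
  shows "computable (\<lambda>z. F (f z) (g z))"
proof -
  obtain rf rg where "\<forall>z. eval rf [z] (f z)" "\<forall>z. eval rg [z] (g z)"
    using assms(2,3) unfolding computable_def by blast
  then have "\<forall>z. eval (Comp r [rf, rg]) [z] (F (f z) (g z))" using assms(1) by (blast intro: eval_Comp2)
  then show ?thesis unfolding computable_def by blast
qed

lemma computable_comp: "computable f \<Longrightarrow> computable h \<Longrightarrow> computable (\<lambda>z. f (h z))"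
proof -
  assume "computable f" and "computable h"
  then obtain rf where "\<forall>z. eval rf [z] (f z)" unfolding computable_def by blast
  then show ?thesis using computable_unary[of f rf h] \<open>computable h\<close> by simp
qed

lemma decidable_comp: "decidable P \<Longrightarrow> computable h \<Longrightarrow> decidable (\<lambda>z. P (h z))"
  unfolding decidable_def by (drule computable_comp) auto

lemma computable_Suc: "computable f \<Longrightarrow> computable (\<lambda>z. Suc (f z))"
  by (rule computable_unary[of _ Succ]) (simp add: eval_Succ)

lemma computable_const: "computable (\<lambda>z. c)"
proof (induction c)
  case 0
  show ?case unfolding computable_def using eval_Zero by blast
next
  case (Suc c)
  then show ?case by (rule computable_Suc)
qed

lemma computable_add: "computable f \<Longrightarrow> computable g \<Longrightarrow> computable (\<lambda>z. f z + g z)"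
  by (rule computable_binary[of _ r_add]) (simp add: eval_add)

lemma computable_sub: "computable f \<Longrightarrow> computable g \<Longrightarrow> computable (\<lambda>z. f z - g z)"
  by (rule computable_binary[of _ r_sub]) (simp add: eval_sub)

lemma computable_npair: "computable f \<Longrightarrow> computable g \<Longrightarrow> computable (\<lambda>z. npair (f z) (g z))"
  by (rule computable_binary[of _ r_npair]) (simp add: eval_npair)

lemma computable_nfst: "computable f \<Longrightarrow> computable (\<lambda>z. nfst (f z))"
  by (rule computable_unary[of _ r_nfst]) (simp add: eval_nfst)

lemma computable_nsnd: "computable f \<Longrightarrow> computable (\<lambda>z. nsnd (f z))"
  by (rule computable_unary[of _ r_nsnd]) (simp add: eval_nsnd)

lemma computable_comp2:
  "computable (\<lambda>z. F (nfst z) (nsnd z)) \<Longrightarrow> computable f \<Longrightarrow> computable g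
   \<Longrightarrow> computable (\<lambda>z. F (f z) (g z))"
  using computable_comp[of "\<lambda>z. F (nfst z) (nsnd z)" "\<lambda>z. npair (f z) (g z)"] computable_npair
  by simp

lemma decidable_comp2:
  "decidable (\<lambda>z. P (nfst z) (nsnd z)) \<Longrightarrow> computable f \<Longrightarrow> computable g
   \<Longrightarrow> decidable (\<lambda>z. P (f z) (g z))"
  using decidable_comp[of "\<lambda>z. P (nfst z) (nsnd z)" "\<lambda>z. npair (f z) (g z)"] computable_npair
  by simp

lemma computable_program2:
  assumes "computable (\<lambda>z. f (nfst z) (nsnd z))"
  shows "\<exists>r. \<forall>x y. eval r [x, y] (f x y)"
proof -
  obtain rf where rf: "\<forall>z. eval rf [z] (f (nfst z) (nsnd z))"
    using assms unfolding computable_def by blast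
  have "eval (Comp rf [Comp r_npair [Proj 0, Proj 1]]) [x, y] (f x y)" for x y
  proof -
    have rf': "eval rf [npair x y] (f x y)" using rf[rule_format, of "npair x y"] by simp
    show ?thesis by (rule eval_intros eval_npair rf' | simp)+
  qed
  then show ?thesis by blast
qed

lemma computable_program3:
  assumes "computable (\<lambda>z. f (nfst z) (nfst (nsnd z)) (nsnd (nsnd z)))"
  shows "\<exists>r. \<forall>x y w. eval r [x, y, w] (f x y w)"
proof -
  obtain rf where rf: "\<forall>z. eval rf [z] (f (nfst z) (nfst (nsnd z)) (nsnd (nsnd z)))"
    using assms unfolding computable_def by blast
  have "eval (Comp rf [Comp r_npair [Proj 0, Comp r_npair [Proj 1, Proj 2]]]) [x, y, w] (f x y w)"
    for x y w
  proof -
    have rf': "eval rf [npair x (npair y w)] (f x y w)"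
      using rf[rule_format, of "npair x (npair y w)"] by simp
    show ?thesis by (rule eval_intros eval_npair rf' | simp)+
  qed
  then show ?thesis by blast
qed

lemma computable_rec_nat:
  assumes "computable a" and "computable b"
    and "computable (\<lambda>z. s (nfst z) (nfst (nsnd z)) (nsnd (nsnd z)))"
  shows "computable (\<lambda>x. rec_nat (b x) (\<lambda>i acc. s i acc x) (a x))"
proof -
  obtain ra rb where ra: "\<forall>z. eval ra [z] (a z)" and rb: "\<forall>z. eval rb [z] (b z)"
    using assms(1,2) unfolding computable_def by blast
  obtain rs where rs: "\<forall>i acc x. eval rs [i, acc, x] (s i acc x)"
    using computable_program3[OF assms(3)] by blast
  have "eval (Prim rb rs) [n, x] (rec_nat (b x) (\<lambda>i acc. s i acc x) n)" for n x
    using rb rs by (blast intro: eval_Prim_rec_nat)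
  then have "eval (Comp (Prim rb rs) [ra, Proj 0]) [x] (rec_nat (b x) (\<lambda>i acc. s i acc x) (a x))" for x
    using ra by (blast intro: eval_Comp2 eval_Proj_0)
  then show ?thesis unfolding computable_def by blast
qed

lemma decidable_eq:
  assumes "computable f" and "computable g"
  shows "decidable (\<lambda>z. f z = g z)"
proof -
  have "computable (\<lambda>z. 1 - ((f z - g z) + (g z - f z)))"
    by (rule computable_sub computable_add computable_const assms)+
  then show ?thesis unfolding decidable_def by (rule computable_cong) auto
qed

lemma decidable_less:
  assumes "computable f" and "computable g"
  shows "decidable (\<lambda>z. f z < g z)"
proof -
  have "computable (\<lambda>z. 1 - (1 - (g z - f z)))"
    by (rule computable_sub computable_const assms)+
  then show ?thesis unfolding decidable_def by (rule computable_cong) auto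
qed

lemma decidable_not:
  assumes "decidable P"
  shows "decidable (\<lambda>z. \<not> P z)"
proof -
  have "computable (\<lambda>z. 1 - (if P z then 1 else 0))"
    by (rule computable_sub computable_const assms[unfolded decidable_def])+
  then show ?thesis unfolding decidable_def by (rule computable_cong) auto
qed

lemma decidable_conj:
  assumes "decidable P" and "decidable Q"
  shows "decidable (\<lambda>z. P z \<and> Q z)"
proof -
  have "computable (\<lambda>z. 1 - ((1 - (if P z then 1 else 0)) + (1 - (if Q z then 1 else 0))))"
    by (rule computable_sub computable_add computable_const assms[unfolded decidable_def])+
  then show ?thesis unfolding decidable_def by (rule computable_cong) auto
qed

lemma decidable_disj: "decidable P \<Longrightarrow> decidable Q \<Longrightarrow> decidable (\<lambda>z. P z \<or> Q z)"
  using decidable_not[OF decidable_conj[OF decidable_not decidable_not]] by simp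

lemma decidable_imp: "decidable P \<Longrightarrow> decidable Q \<Longrightarrow> decidable (\<lambda>z. P z \<longrightarrow> Q z)"
  using decidable_not[OF decidable_conj[OF _ decidable_not]] by simp

text \<open>The test selects the number of recursion steps, zero or one.\<close>
lemma computable_if:
  assumes "decidable P" and "computable f" and "computable g"
  shows "computable (\<lambda>z. if P z then f z else g z)"
proof -
  have "computable (\<lambda>z. rec_nat (g z) (\<lambda>i acc. f z) (if P z then 1 else 0))"
    using computable_rec_nat[of "\<lambda>z. if P z then 1 else 0" g "\<lambda>i acc z. f z"] assms
      computable_comp[OF assms(2) computable_nsnd[OF computable_nsnd[OF computable_id]]]
    unfolding decidable_def by simp
  then show ?thesis by (rule computable_cong) simp
qed

lemma computable_Least:
  assumes "decidable (\<lambda>z. P (nfst z) (nsnd z))" and "\<And>x. \<exists>y. P y x"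
  shows "computable (\<lambda>x. LEAST y. P y x)"
proof -
  obtain h where h: "\<forall>y x. eval h [y, x] (if \<not> P y x then 1 else 0)"
    using computable_program2[of "\<lambda>y x. if \<not> P y x then 1 else 0"] decidable_not[OF assms(1)]
    unfolding decidable_def by blast
  have "eval h [y, x] (if P y x then 0 else 1)" for y x
    using h[rule_format, of y x] by (cases "P y x") simp_all
  then have "eval (Mini h) [x] (LEAST y. P y x)" for x
    using eval_Mini_iff_Least[of h "[x]" "\<lambda>y. P y x"] assms(2) by blast
  then show ?thesis unfolding computable_def by blast
qed

lemma decidable_all_less:
  assumes "decidable (\<lambda>z. P (nfst z) (nsnd z))" and "computable k"
  shows "decidable (\<lambda>x. \<forall>i<k x. P i x)"
proof -
  have "decidable (\<lambda>z. P (nfst z) (nsnd (nsnd z)))"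
    using decidable_comp2[OF assms(1) computable_nfst[OF computable_id]
        computable_nsnd[OF computable_nsnd[OF computable_id]]] .
  then have "computable (\<lambda>z. if P (nfst z) (nsnd (nsnd z)) then nfst (nsnd z) else 0)"
    using computable_if computable_nfst[OF computable_nsnd[OF computable_id]] computable_const
    by blast
  then have "computable (\<lambda>x. rec_nat 1 (\<lambda>i acc. if P i x then acc else 0) (k x))"
    using computable_rec_nat[of k "\<lambda>z. 1" "\<lambda>i acc x. if P i x then acc else 0"] assms(2)
      computable_const by simp
  moreover have "rec_nat 1 (\<lambda>i acc. if P i x then acc else 0) n = (if \<forall>i<n. P i x then 1 else 0)"
    for x n by (induction n) (auto simp: less_Suc_eq)
  ultimately show ?thesis unfolding decidable_def by (rule computable_cong)
qed

lemma decidable_ex_less: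
  assumes "decidable (\<lambda>z. P (nfst z) (nsnd z))" and "computable k"
  shows "decidable (\<lambda>x. \<exists>i<k x. P i x)"
  using decidable_not[OF decidable_all_less[OF decidable_not[OF assms(1)] assms(2)]] by simp

section \<open>Lists coded as natural numbers\<close>

definition ncons :: "nat \<Rightarrow> nat \<Rightarrow> nat" where
  "ncons a l = Suc (npair a l)"

definition nhd :: "nat \<Rightarrow> nat" where
  "nhd c = nfst (c - 1)"

definition ntl :: "nat \<Rightarrow> nat" where
  "ntl c = nsnd (c - 1)"

definition ndrop :: "nat \<Rightarrow> nat \<Rightarrow> nat" where
  "ndrop c n = rec_nat c (\<lambda>i acc. ntl acc) n"

definition nnth :: "nat \<Rightarrow> nat \<Rightarrow> nat" where
  "nnth c j = nhd (ndrop c j)"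

definition nlen :: "nat \<Rightarrow> nat" where
  "nlen c = (LEAST n. ndrop c n = 0)"

primrec nlist :: "nat list \<Rightarrow> nat" where
  "nlist [] = 0"
| "nlist (x # xs) = ncons x (nlist xs)"

lemma nhd_ncons [simp]: "nhd (ncons a l) = a"
  by (simp add: nhd_def ncons_def)

lemma ntl_ncons [simp]: "ntl (ncons a l) = l"
  by (simp add: ntl_def ncons_def)

lemma ncons_pos [simp]: "0 < ncons a l"
  by (simp add: ncons_def)

lemma ncons_eq_iff [simp]: "ncons a l = ncons b m \<longleftrightarrow> a = b \<and> l = m"
  by (simp add: ncons_def)

lemma ntl_le: "ntl c \<le> c - 1"
  by (simp add: ntl_def nsnd_le)

lemma ncons_nhd_ntl: "c \<noteq> 0 \<Longrightarrow> ncons (nhd c) (ntl c) = c"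
  by (simp add: ncons_def nhd_def ntl_def)

lemma ndrop_0 [simp]: "ndrop c 0 = c"
  by (simp add: ndrop_def)

lemma ndrop_Suc [simp]: "ndrop c (Suc n) = ntl (ndrop c n)"
  by (simp add: ndrop_def)

lemma ndrop_le: "ndrop c n \<le> c - n"
proof (induction n)
  case (Suc n)
  then show ?case using ntl_le[of "ndrop c n"] by simp
qed simp

lemma ntl_nlist [simp]: "ntl (nlist xs) = nlist (tl xs)"
proof (cases xs)
  case Nil
  have "nsnd 0 = 0" using nsnd_le[of 0] by simp
  then show ?thesis using Nil by (simp add: ntl_def)
qed simp

lemma ndrop_nlist: "ndrop (nlist xs) n = nlist (drop n xs)"
  by (induction n) (auto simp: drop_Suc tl_drop)

lemma nlist_eq_0_iff [simp]: "nlist xs = 0 \<longleftrightarrow> xs = []"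
  by (cases xs) auto

lemma nlist_surj: "\<exists>xs. nlist xs = c"
proof (induction c rule: less_induct)
  case (less c)
  show ?case
  proof (cases "c = 0")
    case False
    then have "ntl c < c" using ntl_le[of c] by simp
    then obtain xs where "nlist xs = ntl c" using less by blast
    then have "nlist (nhd c # xs) = c" using ncons_nhd_ntl[OF False] by simp
    then show ?thesis by blast
  qed (use nlist.simps(1) in blast)
qed

lemma nnth_nlist [simp]: "j < length xs \<Longrightarrow> nnth (nlist xs) j = xs ! j"
  by (cases "drop j xs") (auto simp: nnth_def ndrop_nlist hd_drop_conv_nth[symmetric])

lemma nlen_nlist [simp]: "nlen (nlist xs) = length xs"
  unfolding nlen_def ndrop_nlist by (rule Least_equality) auto

lemma nlen_0 [simp]: "nlen 0 = 0"
  using nlen_nlist[of "[]"] by simp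

lemma nlen_ncons [simp]: "nlen (ncons a l) = Suc (nlen l)"
proof -
  obtain xs where "nlist xs = l" using nlist_surj by blast
  then show ?thesis using nlen_nlist[of "a # xs"] nlen_nlist[of xs] by simp
qed

lemma computable_ncons: "computable f \<Longrightarrow> computable g \<Longrightarrow> computable (\<lambda>z. ncons (f z) (g z))"
  unfolding ncons_def by (intro computable_Suc computable_npair)

lemma computable_nhd: "computable f \<Longrightarrow> computable (\<lambda>z. nhd (f z))"
  unfolding nhd_def by (intro computable_nfst computable_sub computable_const)

lemma computable_ntl: "computable f \<Longrightarrow> computable (\<lambda>z. ntl (f z))"
  unfolding ntl_def by (intro computable_nsnd computable_sub computable_const)

lemma computable_ndrop:
  assumes "computable f" and "computable g"
  shows "computable (\<lambda>z. ndrop (f z) (g z))"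
proof -
  have "computable (\<lambda>z. ndrop (nfst z) (nsnd z))"
    unfolding ndrop_def
    by (rule computable_rec_nat[of nsnd nfst "\<lambda>i acc x. ntl acc"])
      (intro computable_nfst computable_nsnd computable_ntl computable_id)+
  then show ?thesis using assms by (rule computable_comp2)
qed

lemma computable_nnth: "computable f \<Longrightarrow> computable g \<Longrightarrow> computable (\<lambda>z. nnth (f z) (g z))"
  unfolding nnth_def by (intro computable_nhd computable_ndrop)

lemma computable_nlen:
  assumes "computable f"
  shows "computable (\<lambda>z. nlen (f z))"
proof -
  have "computable nlen"
    unfolding nlen_def
  proof (rule computable_Least[where P="\<lambda>n c. ndrop c n = 0"])
    show "decidable (\<lambda>z. ndrop (nsnd z) (nfst z) = 0)"
      by (intro decidable_eq computable_ndrop computable_nfst computable_nsnd computable_id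
          computable_const)
    show "\<exists>n. ndrop c n = 0" for c
      using ndrop_le[of c c] by auto
  qed
  then show ?thesis using assms by (rule computable_comp)
qed

lemmas computable_intros = computable_const computable_id computable_Suc computable_add
  computable_sub computable_npair computable_nfst computable_nsnd computable_ncons computable_nhd
  computable_ntl computable_nnth computable_nlen computable_ndrop computable_if decidable_conj
  decidable_disj decidable_imp decidable_not decidable_all_less decidable_ex_less decidable_eq
  decidable_less

section \<open>Certificates of halting computations\<close>

fun encode :: "recf \<Rightarrow> nat" where
  "encode Zero = npair 0 0"
| "encode Succ = npair 1 0"
| "encode (Proj i) = npair 2 i"
| "encode (Comp f gs) = npair 3 (npair (encode f) (nlist (map encode gs)))"
| "encode (Prim f g) = npair 4 (npair (encode f) (encode g))"
| "encode (Mini f) = npair 5 (encode f)"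

abbreviation eval_claim :: "recf \<Rightarrow> nat list \<Rightarrow> nat \<Rightarrow> nat" where
  "eval_claim r xs y \<equiv> npair (encode r) (npair (nlist xs) y)"

text \<open>A certificate entry is \<open>\<langle>claim, aux\<rangle>\<close>, where \<open>claim = eval_claim r xs y\<close> asserts
\<open>eval r xs y\<close>. The entry is justified if the claim follows by one rule of \<open>eval\<close> from claims
made earlier, where \<open>derived P\<close> states that some earlier claim satisfies \<open>P\<close>; \<open>aux\<close> supplies
the intermediate values of a composition or of a recursion step.\<close>
definition justified :: "nat \<Rightarrow> ((nat \<Rightarrow> bool) \<Rightarrow> bool) \<Rightarrow> bool" where
  "justified E derived \<longleftrightarrow>
    (let claim = nfst E; aux = nsnd E; prog = nfst claim; args = nfst (nsnd claim);
      out = nsnd (nsnd claim); tag = nfst prog; dat = nsnd prog in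
    (tag = 0 \<and> out = 0) \<or>
    (tag = 1 \<and> args \<noteq> 0 \<and> out = Suc (nhd args)) \<or>
    (tag = 2 \<and> dat < nlen args \<and> out = nnth args dat) \<or>
    (tag = 3 \<and> nlen aux = nlen (nsnd dat) \<and> derived (\<lambda>X. X = npair (nfst dat) (npair aux out)) \<and>
      (\<forall>j<nlen (nsnd dat).
        derived (\<lambda>X. X = npair (nnth (nsnd dat) j) (npair args (nnth aux j))))) \<or>
    (tag = 4 \<and> args \<noteq> 0 \<and> nhd args = 0 \<and>
      derived (\<lambda>X. X = npair (nfst dat) (npair (ntl args) out))) \<or>
    (tag = 4 \<and> args \<noteq> 0 \<and> nhd args \<noteq> 0 \<and>
      derived (\<lambda>X. X = npair prog (npair (ncons (nhd args - 1) (ntl args)) aux)) \<and>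
      derived (\<lambda>X. X = npair (nsnd dat) (npair (ncons (nhd args - 1) (ncons aux (ntl args))) out))) \<or>
    (tag = 5 \<and> derived (\<lambda>X. X = npair dat (npair (ncons out args) 0)) \<and>
      (\<forall>z<out. derived (\<lambda>X. nfst X = dat \<and> nfst (nsnd X) = ncons z args \<and> 0 < nsnd (nsnd X)))))"

definition valid_trace :: "nat list \<Rightarrow> bool" where
  "valid_trace L \<longleftrightarrow> (\<forall>i<length L. justified (L ! i) (Bex (nfst ` set (take i L))))"

definition derived_before :: "nat \<Rightarrow> nat \<Rightarrow> (nat \<Rightarrow> bool) \<Rightarrow> bool" where
  "derived_before w i P \<longleftrightarrow> (\<exists>k<i. P (nfst (nnth w k)))"

definition valid_trace_code :: "nat \<Rightarrow> bool" where
  "valid_trace_code w \<longleftrightarrow> (\<forall>i<nlen w. justified (nnth w i) (derived_before w i))"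

lemma derived_before_nlist:
  assumes "i \<le> length L"
  shows "derived_before (nlist L) i = Bex (nfst ` set (take i L))"
proof
  fix P
  have "(\<exists>k<i. P (nfst (L ! k))) \<longleftrightarrow> (\<exists>x\<in>set (take i L). P (nfst x))"
    unfolding nth_image[OF assms, symmetric] by auto
  then show "derived_before (nlist L) i P = Bex (nfst ` set (take i L)) P"
    unfolding derived_before_def using assms by auto
qed

lemma valid_trace_code_nlist: "valid_trace_code (nlist L) \<longleftrightarrow> valid_trace L"
  unfolding valid_trace_code_def valid_trace_def by (simp add: derived_before_nlist)

lemma justified_mono:
  assumes "justified E derived" and "\<And>P. derived P \<Longrightarrow> derived' P"
  shows "justified E derived'"
  using assms(1) unfolding justified_def Let_def by (elim disjE conjE) (simp_all add: assms(2))

lemma valid_trace_Nil: "valid_trace []"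
  by (simp add: valid_trace_def)

lemma valid_trace_append:
  assumes "valid_trace A" and "valid_trace B"
  shows "valid_trace (A @ B)"
  unfolding valid_trace_def
proof (intro allI impI)
  fix i assume i: "i < length (A @ B)"
  show "justified ((A @ B) ! i) (Bex (nfst ` set (take i (A @ B))))"
  proof (cases "i < length A")
    case True
    then show ?thesis using assms(1) by (simp add: valid_trace_def nth_append)
  next
    case False
    then have "justified (B ! (i - length A)) (Bex (nfst ` set (take (i - length A) B)))"
      using assms(2) i unfolding valid_trace_def by simp
    then have "justified (B ! (i - length A)) (Bex (nfst ` set (take i (A @ B))))"
      by (rule justified_mono) (use False in auto)
    then show ?thesis using False by (simp add: nth_append)
  qed
qed

lemma valid_trace_snoc:
  assumes "valid_trace L" and "justified E (Bex (nfst ` set L))"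
  shows "valid_trace (L @ [E])"
  using assms unfolding valid_trace_def by (auto simp: nth_append less_Suc_eq)

lemma justified_sound:
  assumes just: "justified E (Bex S)"
    and earlier: "\<And>r xs y. eval_claim r xs y \<in> S \<Longrightarrow> eval r xs y"
    and claim: "nfst E = eval_claim r xs y"
  shows "eval r xs y"
proof (cases r)
  case Zero
  then show ?thesis using just claim by (simp add: justified_def Let_def eval_Zero)
next
  case Succ
  then have "xs \<noteq> [] \<and> y = Suc (hd xs)"
    using just claim by (cases xs) (simp_all add: justified_def Let_def)
  then show ?thesis using Succ by (cases xs) (simp_all add: eval_Succ)
next
  case (Proj n)
  then show ?thesis using just claim by (simp add: justified_def Let_def eval_Proj)
next
  case (Comp f gs)
  obtain ys where ys: "nlist ys = nsnd E" using nlist_surj by blast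
  have C: "length ys = length gs \<and> eval_claim f ys y \<in> S \<and>
      (\<forall>j<length gs.
        npair (nnth (nlist (map encode gs)) j) (npair (nlist xs) (nnth (nlist ys) j)) \<in> S)"
    using just claim Comp ys[symmetric] by (simp add: justified_def Let_def del: nnth_nlist)
  have "eval (gs ! j) xs (ys ! j)" if "j < length gs" for j
  proof -
    have "npair (nnth (nlist (map encode gs)) j) (npair (nlist xs) (nnth (nlist ys) j)) \<in> S"
      using C that by blast
    then show ?thesis using C that by (simp add: earlier)
  qed
  then have "list_all2 (\<lambda>g y. eval g xs y) gs ys"
    using C by (auto intro: list_all2_all_nthI)
  moreover have "eval f ys y" using C earlier by blast
  ultimately show ?thesis using Comp by (blast intro: eval_Comp)
next
  case (Prim f g)
  let ?aux = "nsnd E"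
  obtain x xs' where xs: "xs = x # xs'"
    using just claim Prim by (cases xs) (simp_all add: justified_def Let_def)
  show ?thesis
  proof (cases x)
    case 0
    then have "eval_claim f xs' y \<in> S"
      using just claim Prim xs by (simp add: justified_def Let_def)
    then show ?thesis using xs 0 Prim by (simp add: earlier eval_Prim0)
  next
    case (Suc n)
    then have "eval_claim (Prim f g) (n # xs') ?aux \<in> S"
      and "eval_claim g (n # ?aux # xs') y \<in> S"
      using just claim Prim xs by (simp_all add: justified_def Let_def)
    then show ?thesis using xs Suc Prim by (blast intro: earlier eval_PrimS)
  qed
next
  case (Mini f)
  have C: "eval_claim f (y # xs) 0 \<in> S \<and>
      (\<forall>z<y. \<exists>X\<in>S. nfst X = encode f \<and> nfst (nsnd X) = nlist (z # xs) \<and> 0 < nsnd (nsnd X))"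
    using just claim Mini by (simp add: justified_def Let_def)
  have "\<exists>w>0. eval f (z # xs) w" if "z < y" for z
  proof -
    obtain X where "X \<in> S" "nfst X = encode f" "nfst (nsnd X) = nlist (z # xs)" "0 < nsnd (nsnd X)"
      using C \<open>z < y\<close> by blast
    then have "eval_claim f (z # xs) (nsnd (nsnd X)) \<in> S"
      by (metis npair_nfst_nsnd)
    then show ?thesis using \<open>0 < nsnd (nsnd X)\<close> earlier by blast
  qed
  then show ?thesis using C Mini by (simp add: earlier eval_Mini)
qed

lemma valid_trace_sound:
  assumes "valid_trace L" and "i < length L"
    and "nfst (L ! i) = eval_claim r xs y"
  shows "eval r xs y"
  using assms(2,3)
proof (induction i arbitrary: r xs y rule: less_induct)
  case (less i)
  show ?case
  proof (rule justified_sound)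
    show "justified (L ! i) (Bex (nfst ` set (take i L)))"
      using assms(1) less.prems(1) unfolding valid_trace_def by blast
    show "eval r' xs' y'" if mem: "eval_claim r' xs' y' \<in> nfst ` set (take i L)"
      for r' xs' y'
    proof -
      have "set (take i L) = nth L ` {0..<i}"
        using less.prems(1) by (simp add: nth_image)
      then obtain k where "k < i" "nfst (L ! k) = eval_claim r' xs' y'"
        using mem by auto
      then show ?thesis using less.IH less.prems(1) by simp
    qed
  qed (rule less.prems(2))
qed

lemma valid_trace_extend:
  assumes "valid_trace L" and "justified (npair J aux) (Bex (nfst ` set L))"
  shows "\<exists>L'. valid_trace L' \<and> J \<in> nfst ` set L'"
proof -
  have "valid_trace (L @ [npair J aux])" using assms by (rule valid_trace_snoc)
  moreover have "J \<in> nfst ` set (L @ [npair J aux])" by (auto intro: image_eqI[of _ _ "npair J aux"])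
  ultimately show ?thesis by blast
qed

lemma valid_trace_collect:
  fixes n :: nat
  assumes "\<forall>z<n. \<exists>L. valid_trace L \<and> Q z (nfst ` set L)"
    and mono: "\<And>z S S'. Q z S \<Longrightarrow> S \<subseteq> S' \<Longrightarrow> Q z S'"
  shows "\<exists>L. valid_trace L \<and> (\<forall>z<n. Q z (nfst ` set L))"
  using assms(1)
proof (induction n)
  case 0
  then show ?case using valid_trace_Nil by blast
next
  case (Suc n)
  then obtain L where L: "valid_trace L" "\<forall>z<n. Q z (nfst ` set L)" by auto
  obtain L' where L': "valid_trace L'" "Q n (nfst ` set L')" using Suc.prems by blast
  have "\<forall>z<Suc n. Q z (nfst ` set (L @ L'))"
    using L(2) L'(2) by (auto simp: less_Suc_eq elim!: mono)
  then show ?case using valid_trace_append[OF L(1) L'(1)] by blast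
qed

lemma eval_valid_trace:
  "eval r xs y \<Longrightarrow> \<exists>L. valid_trace L \<and> eval_claim r xs y \<in> nfst ` set L"
proof (induction rule: eval.induct)
  case (eval_Zero xs)
  show ?case
    by (rule valid_trace_extend[OF valid_trace_Nil, where aux=0]) (simp add: justified_def Let_def)
next
  case (eval_Succ x xs)
  show ?case
    by (rule valid_trace_extend[OF valid_trace_Nil, where aux=0]) (simp add: justified_def Let_def)
next
  case (eval_Proj i xs)
  show ?case
    by (rule valid_trace_extend[OF valid_trace_Nil, where aux=0]) (use eval_Proj in \<open>simp add: justified_def\<close>)
next
  case (eval_Comp xs gs ys f z)
  have len: "length gs = length ys" using eval_Comp.IH(1) by (rule list_all2_lengthD)
  have "\<forall>j<length gs. \<exists>L. valid_trace L \<and> eval_claim (gs ! j) xs (ys ! j) \<in> nfst ` set L"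
    using eval_Comp.IH(1) by (auto simp: list_all2_conv_all_nth)
  then obtain L1 where L1: "valid_trace L1"
    "\<forall>j<length gs. eval_claim (gs ! j) xs (ys ! j) \<in> nfst ` set L1"
    using valid_trace_collect[where Q="\<lambda>j S. eval_claim (gs ! j) xs (ys ! j) \<in> S"]
    by blast
  obtain L2 where L2: "valid_trace L2" "eval_claim f ys z \<in> nfst ` set L2"
    using eval_Comp.IH(2) by blast
  have "justified (npair (eval_claim (Comp f gs) xs z) (nlist ys))
      (Bex (nfst ` set (L1 @ L2)))"
    unfolding justified_def Let_def using L1(2) L2(2) len by auto
  then show ?case by (rule valid_trace_extend[OF valid_trace_append[OF L1(1) L2(1)]])
next
  case (eval_Prim0 f xs y g)
  then obtain L where L: "valid_trace L" "eval_claim f xs y \<in> nfst ` set L"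
    by blast
  have "justified (npair (eval_claim (Prim f g) (0 # xs) y) 0) (Bex (nfst ` set L))"
    unfolding justified_def Let_def using L(2) by simp
  then show ?case by (rule valid_trace_extend[OF L(1)])
next
  case (eval_PrimS f g n xs y z)
  obtain L1 where L1: "valid_trace L1" "eval_claim (Prim f g) (n # xs) y \<in> nfst ` set L1"
    using eval_PrimS.IH(1) by blast
  obtain L2 where L2: "valid_trace L2" "eval_claim g (n # y # xs) z \<in> nfst ` set L2"
    using eval_PrimS.IH(2) by blast
  have "justified (npair (eval_claim (Prim f g) (Suc n # xs) z) y)
      (Bex (nfst ` set (L1 @ L2)))"
    unfolding justified_def Let_def using L1(2) L2(2) by (simp add: image_Un)
  then show ?case by (rule valid_trace_extend[OF valid_trace_append[OF L1(1) L2(1)]])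
next
  case (eval_Mini f y xs)
  let ?Q = "\<lambda>z S. \<exists>w>0. eval_claim f (z # xs) w \<in> S"
  have "\<forall>z<y. \<exists>L. valid_trace L \<and> ?Q z (nfst ` set L)"
    using eval_Mini.IH(2) by blast
  then obtain L1 where L1: "valid_trace L1" "\<forall>z<y. ?Q z (nfst ` set L1)"
    using valid_trace_collect[where Q="?Q"] by blast
  obtain L2 where L2: "valid_trace L2" "eval_claim f (y # xs) 0 \<in> nfst ` set L2"
    using eval_Mini.IH(1) by blast
  have "\<exists>X\<in>nfst ` set (L1 @ L2). nfst X = encode f \<and> nfst (nsnd X) = ncons z (nlist xs) \<and>
      0 < nsnd (nsnd X)" if zy: "z < y" for z
  proof -
    obtain w where "w > 0" "eval_claim f (z # xs) w \<in> nfst ` set (L1 @ L2)"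
      using L1(2) zy by auto
    then show ?thesis by (intro bexI[of _ "eval_claim f (z # xs) w"]) auto
  qed
  then have "justified (npair (eval_claim (Mini f) xs y) 0)
      (Bex (nfst ` set (L1 @ L2)))"
    unfolding justified_def Let_def using L2(2) by (simp add: image_Un)
  then show ?case by (rule valid_trace_extend[OF valid_trace_append[OF L1(1) L2(1)]])
qed

lemma decidable_valid_trace_code: "computable f \<Longrightarrow> decidable (\<lambda>z. valid_trace_code (f z))"
proof (rule decidable_comp)
  have "decidable (\<lambda>z. justified (nnth (nfst z) (nsnd z)) (derived_before (nfst z) (nsnd z)))"
    unfolding justified_def derived_before_def Let_def by (rule computable_intros)+
  then have "decidable (\<lambda>z. justified (nnth (nsnd z) (nfst z)) (derived_before (nsnd z) (nfst z)))"
    by (rule decidable_comp2) (rule computable_intros)+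
  then show "decidable valid_trace_code"
    unfolding valid_trace_code_def by (rule decidable_all_less) (rule computable_intros)+
qed

section \<open>Self-delimiting program prefixes\<close>

lemma computable_div2: "computable f \<Longrightarrow> computable (\<lambda>z. f z div 2)"
proof (rule computable_comp[where f="\<lambda>x. x div 2"])
  have "computable (\<lambda>x. LEAST q. x < Suc (Suc (q + q)))"
  proof (rule computable_Least[where P="\<lambda>q x. x < Suc (Suc (q + q))"])
    show "decidable (\<lambda>z. nsnd z < Suc (Suc (nfst z + nfst z)))"
      by (rule computable_intros)+
    show "\<exists>q. x < Suc (Suc (q + q))" for x
      by (rule exI[of _ x]) simp
  qed
  moreover have "(LEAST q. x < Suc (Suc (q + q))) = x div 2" for x :: nat
    by (rule Least_equality) auto
  ultimately show "computable (\<lambda>x. x div 2)" by simp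
qed

lemma decidable_even:
  assumes "computable f"
  shows "decidable (\<lambda>z. even (f z))"
proof -
  have "decidable (\<lambda>z. f z = f z div 2 + f z div 2)"
    by (rule computable_intros computable_div2 assms)+
  then show ?thesis by (rule decidable_cong) presburger
qed

definition prefix_code :: "nat \<Rightarrow> bool list \<Rightarrow> bool list" where
  "prefix_code e p = replicate e True @ False # p"

text \<open>On codes, \<open>bl_code q\<close> is odd iff \<open>q\<close> starts with \<open>False\<close>, and dropping the head of \<open>q\<close>
maps \<open>n\<close> to \<open>(n - 1) div 2\<close>; the functions below parse a code of \<open>prefix_code e p\<close>.\<close>
definition code_drop :: "nat \<Rightarrow> nat \<Rightarrow> nat" where
  "code_drop N k = rec_nat N (\<lambda>i acc. (acc - 1) div 2) k"

definition code_index :: "nat \<Rightarrow> nat" where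
  "code_index N = (LEAST k. code_drop N k = 0 \<or> odd (code_drop N k))"

definition code_payload :: "nat \<Rightarrow> nat" where
  "code_payload N = (code_drop N (code_index N) - 1) div 2"

lemma code_drop_0 [simp]: "code_drop N 0 = N"
  by (simp add: code_drop_def)

lemma code_drop_Suc [simp]: "code_drop N (Suc k) = (code_drop N k - 1) div 2"
  by (simp add: code_drop_def)

lemma code_drop_le: "code_drop N k \<le> N - k"
  by (induction k) auto

lemma code_drop_bl_code: "code_drop (bl_code q) k = bl_code (drop k q)"
proof (induction k)
  case (Suc k)
  have "(bl_code xs - 1) div 2 = bl_code (tl xs)" for xs
    by (cases xs) auto
  then show ?case using Suc by (simp add: drop_Suc tl_drop)
qed simp

lemma code_index_prefix_code: "code_index (bl_code (prefix_code e p)) = e"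
  unfolding code_index_def
proof (rule Least_equality)
  show "code_drop (bl_code (prefix_code e p)) e = 0 \<or> odd (code_drop (bl_code (prefix_code e p)) e)"
    by (simp add: code_drop_bl_code prefix_code_def)
  fix k
  assume k: "code_drop (bl_code (prefix_code e p)) k = 0 \<or> odd (code_drop (bl_code (prefix_code e p)) k)"
  show "e \<le> k"
  proof (rule ccontr)
    assume "\<not> e \<le> k"
    then have "k < length (prefix_code e p)" and "prefix_code e p ! k = True"
      by (simp_all add: prefix_code_def nth_append)
    then have "drop k (prefix_code e p) = True # drop (Suc k) (prefix_code e p)"
      by (metis Cons_nth_drop_Suc)
    then show False using k by (simp add: code_drop_bl_code)
  qed
qed

lemma code_payload_prefix_code: "code_payload (bl_code (prefix_code e p)) = bl_code p"
proof -
  have "drop e (prefix_code e p) = False # p"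
    by (simp add: prefix_code_def)
  then show ?thesis
    by (simp add: code_payload_def code_index_prefix_code code_drop_bl_code)
qed

lemma length_prefix_code: "length (prefix_code e p) = length p + (e + 1)"
  by (simp add: prefix_code_def)

lemma computable_code_drop:
  assumes "computable f" and "computable g"
  shows "computable (\<lambda>z. code_drop (f z) (g z))"
proof -
  have "computable (\<lambda>z. code_drop (nfst z) (nsnd z))"
    unfolding code_drop_def
    by (rule computable_rec_nat[of nsnd nfst "\<lambda>i acc x. (acc - 1) div 2"])
      (rule computable_intros computable_div2)+
  then show ?thesis using assms by (rule computable_comp2)
qed

lemma computable_code_index:
  assumes "computable f"
  shows "computable (\<lambda>z. code_index (f z))"
proof -
  have "computable code_index"
    unfolding code_index_def
  proof (rule computable_Least[where P="\<lambda>k N. code_drop N k = 0 \<or> odd (code_drop N k)"])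
    show "decidable (\<lambda>z. code_drop (nsnd z) (nfst z) = 0 \<or> odd (code_drop (nsnd z) (nfst z)))"
      by (rule computable_intros computable_code_drop decidable_even)+
    show "\<exists>k. code_drop N k = 0 \<or> odd (code_drop N k)" for N
      using code_drop_le[of N N] by auto
  qed
  then show ?thesis using assms by (rule computable_comp)
qed

lemma computable_code_payload: "computable f \<Longrightarrow> computable (\<lambda>z. code_payload (f z))"
  unfolding code_payload_def
  by (rule computable_intros computable_div2 computable_code_drop computable_code_index | assumption)+

section \<open>The universal approximation\<close>

text \<open>A witness for input \<open>N\<close> is a pair \<open>\<langle>w, k\<rangle>\<close>: \<open>w\<close> codes a valid certificate whose
\<open>k\<close>-th claim is a computation of program \<open>code_index N\<close> on arguments \<open>[code_payload N, t]\<close>.\<close>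
definition witness_claim :: "nat \<Rightarrow> nat" where
  "witness_claim v = nfst (nnth (nfst v) (nsnd v))"

definition witness :: "nat \<Rightarrow> nat \<Rightarrow> bool" where
  "witness N v \<longleftrightarrow> valid_trace_code (nfst v) \<and> nsnd v < nlen (nfst v) \<and>
     nfst (witness_claim v) = code_index N \<and> nlen (nfst (nsnd (witness_claim v))) = 2 \<and>
     nhd (nfst (nsnd (witness_claim v))) = code_payload N"

definition witness_output :: "nat \<Rightarrow> nat" where
  "witness_output v = nsnd (nsnd (witness_claim v))"

definition dominant_witness :: "('d \<Rightarrow> 'd \<Rightarrow> bool) \<Rightarrow> (nat \<Rightarrow> 'd) \<Rightarrow> nat \<Rightarrow> nat \<Rightarrow> nat \<Rightarrow> bool" where
  "dominant_witness lt \<rho> N t v \<longleftrightarrow> v < t \<and> witness N v \<and>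
     (\<forall>v'<t. witness N v' \<longrightarrow>
        witness_output v' = witness_output v \<or> lt (\<rho> (witness_output v')) (\<rho> (witness_output v)))"

definition univ_approx :: "('d \<Rightarrow> 'd \<Rightarrow> bool) \<Rightarrow> (nat \<Rightarrow> 'd) \<Rightarrow> bool list \<Rightarrow> nat \<Rightarrow> 'd option" where
  "univ_approx lt \<rho> p t =
    (if \<exists>v. dominant_witness lt \<rho> (bl_code p) t v
     then Some (\<rho> (witness_output (LEAST v. dominant_witness lt \<rho> (bl_code p) t v))) else None)"

lemma computable_witness_claim: "computable f \<Longrightarrow> computable (\<lambda>z. witness_claim (f z))"
  unfolding witness_claim_def by (rule computable_intros | assumption)+

lemma decidable_witness: "computable f \<Longrightarrow> computable g \<Longrightarrow> decidable (\<lambda>z. witness (f z) (g z))"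
  unfolding witness_def
  by (rule computable_intros computable_witness_claim computable_code_index computable_code_payload
      decidable_comp[OF decidable_valid_trace_code] | assumption)+

lemma decidable_dominant_witness:
  assumes "decidable (\<lambda>z. lt (\<rho> (nfst z)) (\<rho> (nsnd z)))"
  shows "decidable (\<lambda>z. dominant_witness lt \<rho> (nfst (nsnd z)) (nsnd (nsnd z)) (nfst z))"
  unfolding dominant_witness_def witness_output_def
  by (rule computable_intros decidable_witness computable_witness_claim decidable_comp2[OF assms])+

lemma witness_sound:
  assumes "witness (bl_code (prefix_code (encode r) p)) v"
  shows "\<exists>t. eval r [bl_code p, t] (witness_output v)"
proof -
  obtain L where L: "nlist L = nfst v" using nlist_surj by blast
  obtain args where args: "nlist args = nfst (nsnd (witness_claim v))" using nlist_surj by blast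
  have w: "valid_trace_code (nfst v)" "nsnd v < nlen (nfst v)" "nfst (witness_claim v) = encode r"
    "nlen (nfst (nsnd (witness_claim v))) = 2" "nhd (nfst (nsnd (witness_claim v))) = bl_code p"
    using assms by (simp_all add: witness_def code_index_prefix_code code_payload_prefix_code)
  then have valid: "valid_trace L" and k: "nsnd v < length L"
    using L[symmetric] by (simp_all add: valid_trace_code_nlist)
  have claim: "witness_claim v = nfst (L ! nsnd v)"
    using k L[symmetric] by (simp add: witness_claim_def)
  have "length args = 2" and "nhd (nlist args) = bl_code p"
    using w(4,5) args[symmetric] by simp_all
  then obtain t where "args = [bl_code p, t]"
    by (auto simp: numeral_2_eq_2 length_Suc_conv)
  then have "nfst (L ! nsnd v) = eval_claim r [bl_code p, t] (witness_output v)"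
    using claim w(3) args unfolding witness_output_def by (metis npair_nfst_nsnd)
  then show ?thesis using valid_trace_sound[OF valid k] by blast
qed

lemma witness_complete:
  assumes "eval r [bl_code p, t] y"
  shows "\<exists>v. witness (bl_code (prefix_code (encode r) p)) v \<and> witness_output v = y"
proof -
  obtain L where L: "valid_trace L" "eval_claim r [bl_code p, t] y \<in> nfst ` set L"
    using eval_valid_trace[OF assms] by blast
  then obtain k where k: "k < length L" "nfst (L ! k) = eval_claim r [bl_code p, t] y"
    by (auto simp: in_set_conv_nth)
  have "witness (bl_code (prefix_code (encode r) p)) (npair (nlist L) k)"
    using L(1) k by (simp add: witness_def witness_claim_def valid_trace_code_nlist
        code_index_prefix_code code_payload_prefix_code)
  moreover have "witness_output (npair (nlist L) k) = y"
    using k by (simp add: witness_output_def witness_claim_def)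
  ultimately show ?thesis by blast
qed

lemma pc2_Least:
  assumes P: "decidable (\<lambda>z. P (nfst z) (nfst (nsnd z)) (nsnd (nsnd z)))"
    and g: "computable g" and "inj \<rho>"
  shows "pc2 \<rho> (\<lambda>p t. if \<exists>v. P v (bl_code p) t then Some (\<rho> (g (LEAST v. P v (bl_code p) t))) else None)"
proof -
  obtain h where h: "\<forall>v N t. eval h [v, N, t] (if \<not> P v N t then 1 else 0)"
    using computable_program3[of "\<lambda>v N t. if \<not> P v N t then 1 else 0"] decidable_not[OF P]
    unfolding decidable_def by blast
  have h': "eval h (v # [N, t]) (if P v N t then 0 else 1)" for v N t
    using h[rule_format, of v N t] by (cases "P v N t") simp_all
  obtain rg where rg: "\<forall>z. eval rg [z] (g z)"
    using g unfolding computable_def by blast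
  have "eval (Comp rg [Mini h]) [N, t] y \<longleftrightarrow> (\<exists>v. P v N t) \<and> y = g (LEAST v. P v N t)" for N t y
    unfolding eval_Comp1_iff[OF rg] eval_Mini_iff_Least[OF h'] by blast
  then show ?thesis
    unfolding pc2_def using \<open>inj \<rho>\<close> by (intro exI[of _ "Comp rg [Mini h]"]) (auto simp: inj_eq)
qed

lemma pc2_univ_approx:
  assumes "decidable (\<lambda>z. lt (\<rho> (nfst z)) (\<rho> (nsnd z)))" and "inj \<rho>"
  shows "pc2 \<rho> (univ_approx lt \<rho>)"
proof -
  have "computable witness_output"
    using computable_witness_claim[OF computable_id] unfolding witness_output_def
    by (rule computable_nsnd[OF computable_nsnd])
  then show ?thesis
    unfolding univ_approx_def[abs_def]
    by (rule pc2_Least[where P="\<lambda>v N t. dominant_witness lt \<rho> N t v",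
          OF decidable_dominant_witness[where lt=lt and \<rho>=\<rho>, OF assms(1)] _ assms(2)])
qed

lemma univ_approx_SomeD:
  assumes "univ_approx lt \<rho> p t = Some d"
  shows "\<exists>v. dominant_witness lt \<rho> (bl_code p) t v \<and> d = \<rho> (witness_output v)"
  using assms LeastI_ex[of "dominant_witness lt \<rho> (bl_code p) t"]
  unfolding univ_approx_def by (auto split: if_splits)

text \<open>This holds whether or not \<open>lt\<close> is a partial order: a dominant witness at stage \<open>t\<close> is
still a witness below any later stage, so it is dominated there.\<close>
lemma mono_second_univ_approx: "mono_second lt (univ_approx lt \<rho>)"
  unfolding mono_second_def
proof (intro allI impI)
  fix p t t' d d'
  assume "t \<le> t'" and "univ_approx lt \<rho> p t = Some d" and "univ_approx lt \<rho> p t' = Some d'"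
  then obtain v v' where v: "dominant_witness lt \<rho> (bl_code p) t v" "d = \<rho> (witness_output v)"
    and v': "dominant_witness lt \<rho> (bl_code p) t' v'" "d' = \<rho> (witness_output v')"
    by (blast dest: univ_approx_SomeD)
  have "v < t'" and "witness (bl_code p) v"
    using v(1) \<open>t \<le> t'\<close> unfolding dominant_witness_def by auto
  then have "witness_output v = witness_output v' \<or>
      lt (\<rho> (witness_output v)) (\<rho> (witness_output v'))"
    using v'(1) unfolding dominant_witness_def by blast
  then show "d = d' \<or> lt d d'" using v(2) v'(2) by auto
qed

section \<open>Maxima of monotone approximations\<close>

definition outputs :: "(bool list \<Rightarrow> nat \<Rightarrow> 'd option) \<Rightarrow> bool list \<Rightarrow> 'd set" where
  "outputs f p = {d. \<exists>t. f p t = Some d}"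

lemma maxD_outputs:
  "maxD lt f p =
    (if finite (outputs f p) \<and> outputs f p \<noteq> {}
     then Some (THE d. d \<in> outputs f p \<and> (\<forall>e\<in>outputs f p. e = d \<or> lt e d)) else None)"
  by (simp add: maxD_def outputs_def Let_def)

lemma finite_chain_has_greatest:
  assumes "finite S" and "S \<noteq> {}" and "transp lt"
    and chain: "\<forall>a\<in>S. \<forall>b\<in>S. a = b \<or> lt a b \<or> lt b a"
  shows "\<exists>m\<in>S. \<forall>e\<in>S. e = m \<or> lt e m"
  using assms(1,2) chain
proof (induction S rule: finite_ne_induct)
  case (insert x F)
  then obtain m where m: "m \<in> F" "\<forall>e\<in>F. e = m \<or> lt e m" by blast
  have "x = m \<or> lt x m \<or> lt m x" using insert.prems m(1) by blast
  then show ?case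
  proof (elim disjE)
    assume "lt m x"
    then have "lt e x" if "lt e m" for e
      using transpD[OF \<open>transp lt\<close> that] by blast
    then have "\<forall>e\<in>insert x F. e = x \<or> lt e x"
      using m(2) \<open>lt m x\<close> by auto
    then show ?case by blast
  qed (use m in blast)+
qed simp

lemma maxD_eqI:
  assumes "irreflp lt" and "transp lt"
    and "finite (outputs f p)" and "d \<in> outputs f p" and "\<forall>e\<in>outputs f p. e = d \<or> lt e d"
  shows "maxD lt f p = Some d"
proof -
  have "(THE d. d \<in> outputs f p \<and> (\<forall>e\<in>outputs f p. e = d \<or> lt e d)) = d"
  proof (rule the_equality)
    fix d' assume "d' \<in> outputs f p \<and> (\<forall>e\<in>outputs f p. e = d' \<or> lt e d')"
    then have "d' = d \<or> lt d' d" and "d = d' \<or> lt d d'" using assms(4,5) by blast+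
    then show "d' = d" using assms(1,2) by (metis irreflpD transpD)
  qed (use assms(4,5) in blast)
  then show ?thesis using assms(3,4) by (auto simp: maxD_outputs)
qed

lemma maxD_SomeD:
  assumes "irreflp lt" and "transp lt" and "mono_second lt f" and "maxD lt f p = Some d"
  shows "finite (outputs f p) \<and> d \<in> outputs f p \<and> (\<forall>e\<in>outputs f p. e = d \<or> lt e d)"
proof -
  have fin: "finite (outputs f p)" and ne: "outputs f p \<noteq> {}"
    using assms(4) by (auto simp: maxD_outputs split: if_splits)
  have "\<forall>a\<in>outputs f p. \<forall>b\<in>outputs f p. a = b \<or> lt a b \<or> lt b a"
  proof (intro ballI)
    fix a b assume "a \<in> outputs f p" "b \<in> outputs f p"
    then obtain t1 t2 where "f p t1 = Some a" "f p t2 = Some b"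
      unfolding outputs_def by blast
    then show "a = b \<or> lt a b \<or> lt b a"
      using assms(3) nat_le_linear[of t1 t2] unfolding mono_second_def by blast
  qed
  then obtain m where m: "m \<in> outputs f p" "\<forall>e\<in>outputs f p. e = m \<or> lt e m"
    using finite_chain_has_greatest[OF fin ne assms(2)] by blast
  then have "maxD lt f p = Some m" using maxD_eqI[OF assms(1,2) fin] by blast
  then show ?thesis using fin m assms(4) by simp
qed

section \<open>Universality\<close>

lemma outputs_univ_approx_prefix_code:
  assumes "\<forall>p t y. eval r [bl_code p, t] y \<longleftrightarrow> f p t = Some (\<rho> y)"
  shows "outputs (univ_approx lt \<rho>) (prefix_code (encode r) p) \<subseteq> outputs f p"
proof
  fix d assume "d \<in> outputs (univ_approx lt \<rho>) (prefix_code (encode r) p)"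
  then obtain t where "univ_approx lt \<rho> (prefix_code (encode r) p) t = Some d"
    unfolding outputs_def by blast
  then have "\<exists>v. dominant_witness lt \<rho> (bl_code (prefix_code (encode r) p)) t v \<and>
      d = \<rho> (witness_output v)"
    by (rule univ_approx_SomeD)
  then obtain v where "dominant_witness lt \<rho> (bl_code (prefix_code (encode r) p)) t v"
    and "d = \<rho> (witness_output v)"
    by blast
  then have "witness (bl_code (prefix_code (encode r) p)) v" and "d = \<rho> (witness_output v)"
    unfolding dominant_witness_def by blast+
  then show "d \<in> outputs f p"
    using witness_sound assms unfolding outputs_def by blast
qed

text \<open>Once the stage exceeds a witness for the greatest output \<open>d\<close> of \<open>f(p, _)\<close>, that witness
is dominant, so the least dominant witness also outputs \<open>d\<close>.\<close>
lemma greatest_in_outputs_univ_approx: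
  assumes "irreflp lt" and "transp lt" and "surj \<rho>" and "inj \<rho>"
    and r: "\<forall>p t y. eval r [bl_code p, t] y \<longleftrightarrow> f p t = Some (\<rho> y)"
    and d: "d \<in> outputs f p" and greatest: "\<forall>e\<in>outputs f p. e = d \<or> lt e d"
  shows "d \<in> outputs (univ_approx lt \<rho>) (prefix_code (encode r) p)"
proof -
  let ?N = "bl_code (prefix_code (encode r) p)"
  have below_d: "\<rho> (witness_output v) = d \<or> lt (\<rho> (witness_output v)) d" if wv: "witness ?N v" for v
  proof -
    obtain t where "eval r [bl_code p, t] (witness_output v)"
      using witness_sound[OF wv] by blast
    then have "f p t = Some (\<rho> (witness_output v))"
      using r by simp
    then have "\<rho> (witness_output v) \<in> outputs f p"
      unfolding outputs_def by blast
    then show ?thesis using greatest by blast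
  qed
  obtain y where "d = \<rho> y" using surjD[OF \<open>surj \<rho>\<close>] by blast
  obtain t0 where "f p t0 = Some d" using d unfolding outputs_def by blast
  then have "eval r [bl_code p, t0] y" using r \<open>d = \<rho> y\<close> by simp
  then obtain v0 where v0: "witness ?N v0" and "witness_output v0 = y"
    using witness_complete by blast
  then have d_v0: "d = \<rho> (witness_output v0)" using \<open>d = \<rho> y\<close> by simp
  have "dominant_witness lt \<rho> ?N (Suc v0) v0"
    unfolding dominant_witness_def
    using v0 below_d d_v0 \<open>inj \<rho>\<close> by (auto simp: inj_eq)
  then have "\<exists>v. dominant_witness lt \<rho> ?N (Suc v0) v" by blast
  then obtain d' where d': "univ_approx lt \<rho> (prefix_code (encode r) p) (Suc v0) = Some d'"
    unfolding univ_approx_def by simp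
  then obtain v where v: "dominant_witness lt \<rho> ?N (Suc v0) v" and d'_v: "d' = \<rho> (witness_output v)"
    using univ_approx_SomeD[OF d'] by blast
  have "d = d' \<or> lt d d'"
    using v v0 d_v0 d'_v unfolding dominant_witness_def by auto
  moreover have "d' = d \<or> lt d' d"
    using v below_d d'_v unfolding dominant_witness_def by blast
  ultimately have "d' = d" using assms(1,2) by (metis irreflpD transpD)
  then show ?thesis using d' unfolding outputs_def by blast
qed

lemma maxD_univ_approx_prefix_code:
  assumes "irreflp lt" and "transp lt" and "bij \<rho>"
    and r: "\<forall>p t y. eval r [bl_code p, t] y \<longleftrightarrow> f p t = Some (\<rho> y)"
    and "mono_second lt f" and "maxD lt f p = Some d"
  shows "maxD lt (univ_approx lt \<rho>) (prefix_code (encode r) p) = Some d"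
proof -
  have f: "finite (outputs f p)" "d \<in> outputs f p" "\<forall>e\<in>outputs f p. e = d \<or> lt e d"
    using maxD_SomeD[OF assms(1,2,5,6)] by blast+
  have sub: "outputs (univ_approx lt \<rho>) (prefix_code (encode r) p) \<subseteq> outputs f p"
    by (rule outputs_univ_approx_prefix_code[OF r])
  show ?thesis
  proof (rule maxD_eqI[OF assms(1,2)])
    show "finite (outputs (univ_approx lt \<rho>) (prefix_code (encode r) p))"
      using f(1) sub by (rule finite_subset[rotated])
    show "d \<in> outputs (univ_approx lt \<rho>) (prefix_code (encode r) p)"
      using greatest_in_outputs_univ_approx[OF assms(1,2) bij_is_surj[OF \<open>bij \<rho>\<close>]
          bij_is_inj[OF \<open>bij \<rho>\<close>] r f(2,3)] .
    show "\<forall>e\<in>outputs (univ_approx lt \<rho>) (prefix_code (encode r) p). e = d \<or> lt e d"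
      using sub f(3) by blast
  qed
qed

lemma Kc_le_add_if_simulation:
  assumes "\<And>p d. F p = Some d \<Longrightarrow> U (g p) = Some d \<and> length (g p) \<le> length p + c"
  shows "\<forall>d \<in> ran F. \<exists>ku kf. Kc U d = Some ku \<and> Kc F d = Some kf \<and> ku \<le> kf + c"
proof
  fix d assume "d \<in> ran F"
  then have ex: "\<exists>p. F p = Some d" by (auto simp: ran_def)
  let ?kf = "LEAST n. \<exists>p. F p = Some d \<and> length p = n"
  obtain p where p: "F p = Some d" "length p = ?kf"
    using LeastI_ex[of "\<lambda>n. \<exists>p. F p = Some d \<and> length p = n"] ex by blast
  then have "U (g p) = Some d" and len: "length (g p) \<le> ?kf + c"
    using assms[OF p(1)] p(2) by auto
  then have "(LEAST n. \<exists>q. U q = Some d \<and> length q = n) \<le> ?kf + c"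
    using Least_le[of "\<lambda>n. \<exists>q. U q = Some d \<and> length q = n" "length (g p)"] by fastforce
  moreover have "\<exists>q. U q = Some d" using \<open>U (g p) = Some d\<close> by blast
  ultimately show "\<exists>ku kf. Kc U d = Some ku \<and> Kc F d = Some kf \<and> ku \<le> kf + c"
    using ex by (simp add: Kc_def)
qed

lemma computable_posetD:
  assumes "computable_poset lt \<rho>"
  shows "bij \<rho>" and "irreflp lt" and "transp lt"
    and "decidable (\<lambda>z. lt (\<rho> (nfst z)) (\<rho> (nsnd z)))"
proof -
  show "bij \<rho>" and "irreflp lt"
    using assms unfolding computable_poset_def irreflp_def by blast+
  show "transp lt"
    using assms unfolding computable_poset_def by (blast intro: transpI)
  obtain r where "\<forall>m n. eval r [m, n] (if lt (\<rho> m) (\<rho> n) then 1 else 0)"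
    using assms unfolding computable_poset_def by blast
  then have "computable (\<lambda>z. if lt (\<rho> (nfst z)) (\<rho> (nsnd z)) then 1 else 0)"
    using computable_binary[of "\<lambda>m n. if lt (\<rho> m) (\<rho> n) then 1 else 0" r nfst nsnd]
      computable_nfst[OF computable_id] computable_nsnd[OF computable_id] by simp
  then show "decidable (\<lambda>z. lt (\<rho> (nfst z)) (\<rho> (nsnd z)))"
    unfolding decidable_def .
qed

lemma maxD_univ_approx_in_MaxPR:
  assumes "computable_poset lt \<rho>"
  shows "maxD lt (univ_approx lt \<rho>) \<in> MaxPR lt \<rho>"
  using pc2_univ_approx[OF computable_posetD(4)[OF assms] bij_is_inj[OF computable_posetD(1)[OF assms]]]
    mono_second_univ_approx
  unfolding MaxPR_def by blast

lemma MaxPR_simulated_by_univ_approx: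
  assumes "computable_poset lt \<rho>" and "F \<in> MaxPR lt \<rho>"
  shows "\<exists>e. \<forall>p d. F p = Some d \<longrightarrow> maxD lt (univ_approx lt \<rho>) (prefix_code e p) = Some d"
proof -
  obtain f r where F: "F = maxD lt f" "mono_second lt f"
    and r: "\<forall>p t y. eval r [bl_code p, t] y \<longleftrightarrow> f p t = Some (\<rho> y)"
    using assms(2) unfolding MaxPR_def pc2_def by blast
  note poset = computable_posetD[OF assms(1)]
  show ?thesis
    using maxD_univ_approx_prefix_code[OF poset(2,3,1) r F(2)] F(1) by blast
qed

theorem mainTheorem5:
  fixes lt :: "'d \<Rightarrow> 'd \<Rightarrow> bool" and \<rho> :: "nat \<Rightarrow> 'd"
  assumes "computable_poset lt \<rho>"
  shows "\<exists>U \<in> MaxPR lt \<rho>. \<forall>F \<in> MaxPR lt \<rho>. \<exists>c::nat. \<forall>d \<in> ran F.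
           \<exists>ku kf. Kc U d = Some ku \<and> Kc F d = Some kf \<and> ku \<le> kf + c"
proof
  let ?U = "maxD lt (univ_approx lt \<rho>)"
  show "?U \<in> MaxPR lt \<rho>"
    using assms by (rule maxD_univ_approx_in_MaxPR)
  show "\<forall>F \<in> MaxPR lt \<rho>. \<exists>c::nat. \<forall>d \<in> ran F.
      \<exists>ku kf. Kc ?U d = Some ku \<and> Kc F d = Some kf \<and> ku \<le> kf + c"
  proof
    fix F assume "F \<in> MaxPR lt \<rho>"
    then obtain e where e: "\<And>p d. F p = Some d \<Longrightarrow> ?U (prefix_code e p) = Some d"
      using MaxPR_simulated_by_univ_approx[OF assms] by blast
    have "\<forall>d \<in> ran F. \<exists>ku kf. Kc ?U d = Some ku \<and> Kc F d = Some kf \<and> ku \<le> kf + (e + 1)"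
      by (rule Kc_le_add_if_simulation[where g="prefix_code e"]) (simp add: e length_prefix_code)
    then show "\<exists>c. \<forall>d \<in> ran F. \<exists>ku kf. Kc ?U d = Some ku \<and> Kc F d = Some kf \<and> ku \<le> kf + c"
      by blast
  qed
qed

end
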